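(* Let $f\in C^1(\mathbb{R}^n,\mathbb{R}^n)$, $g\in C(\mathbb{R}\times\mathbb{R}^n\times[0,1],\mathbb{R}^n)$, and let $x_0$ be a nondegenerate $T$-periodic limit cycle of $\dot x=f(x)$, $T>0$. Let $x_\varepsilon$ ($\varepsilon\in(0,\varepsilon_0]$) be $T$-periodic solutions of $\dot x=f(x)+\varepsilon g(t,x,\varepsilon)$ with $\|x_\varepsilon(t+\Delta_\varepsilon)-x_0(t)\|\le M\varepsilon$ for all $t\in[0,T]$, $\varepsilon\in(0,\varepsilon_0]$, for some $M,\varepsilon_0>0$ and reals $\Delta_\varepsilon\to0$. Suppose there is an eigenfunction $z$ of $\dot z=-(f'(x_0(t)))^*z$ which is not $T$-periodic, with multiplier $\rho$, such that $M^\perp_z(t):=\frac{\rho}{\rho-1}\int_{t-T}^t\langle z(s),g(s,x_0(s),0)\rangle ds\neq0$ for all $t\in[0,T]$. Then there exist $0<c_1\le c_2$ such that for all sufficiently small $\varepsilon>0$, $$c_1\varepsilon\le\|x_\varepsilon(t+\Delta_\varepsilon)-x_0(t)\|\le c_2\varepsilon\quad\text{for all }t\in[0,T].$$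
   Context: Nondegenerate: the characteristic multiplier $+1$ of $\dot y=f'(x_0(t))y$ (eigenvalue $1$ of $Y(T)$, $Y(0)=I$) has algebraic multiplicity $1$. An eigenfunction of a linear $T$-periodic system is a nonzero solution $z$ with $z(t+T)=\rho z(t)$ for all $t$ and some $\rho\in\mathbb{R}$ (its characteristic multiplier). *)

theory Defs
  imports "HOL-Analysis.Analysis" "HOL-Computational_Algebra.Polynomial"
begin

definition charpoly :: "real^'n^'n \<Rightarrow> real poly" where
  "charpoly A = det (\<chi> i j. (if i = j then [:0, 1:] else 0) - [:A $ i $ j:])"

definition alg_mult :: "real^'n^'n \<Rightarrow> real \<Rightarrow> nat" where
  "alg_mult A \<mu> = order \<mu> (charpoly A)"

definition periodic_solution ::
  "(real^'n \<Rightarrow> real^'n) \<Rightarrow> real \<Rightarrow> (real \<Rightarrow> real^'n) \<Rightarrow> bool" where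
  "periodic_solution f T x \<longleftrightarrow> T > 0 \<and>
     (\<forall>t. (x has_vector_derivative f (x t)) (at t)) \<and> (\<forall>t. x (t + T) = x t)"

text \<open>Limit cycle: a nonconstant T-periodic solution whose orbit is isolated, i.e. some
  neighbourhood of the orbit contains no other periodic orbit (of any period).\<close>
definition limit_cycle ::
  "(real^'n \<Rightarrow> real^'n) \<Rightarrow> real \<Rightarrow> (real \<Rightarrow> real^'n) \<Rightarrow> bool" where
  "limit_cycle f T x0 \<longleftrightarrow> periodic_solution f T x0 \<and> (\<exists>s t. x0 s \<noteq> x0 t) \<and>
     (\<exists>e>0. \<forall>y p. periodic_solution f p y \<and> (\<forall>t. infdist (y t) (range x0) < e)
                   \<longrightarrow> range y = range x0)"

text \<open>Nondegenerate: the principal fundamental matrix Y (Y(0) = I) of the variational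
  equation y' = f'(x0 t) y has eigenvalue 1 of algebraic multiplicity 1 at time T.
  Here J is the Jacobian matrix of f.\<close>
definition nondegenerate ::
  "(real^'n \<Rightarrow> real^'n^'n) \<Rightarrow> real \<Rightarrow> (real \<Rightarrow> real^'n) \<Rightarrow> bool" where
  "nondegenerate J T x0 \<longleftrightarrow> (\<exists>Y :: real \<Rightarrow> real^'n^'n. Y 0 = mat 1 \<and>
     (\<forall>t. (Y has_vector_derivative (J (x0 t) ** Y t)) (at t)) \<and> alg_mult (Y T) 1 = 1)"

definition eigenfunction ::
  "(real \<Rightarrow> real^'n^'n) \<Rightarrow> real \<Rightarrow> (real \<Rightarrow> real^'n) \<Rightarrow> real \<Rightarrow> bool" where
  "eigenfunction A T z \<rho> \<longleftrightarrow> (\<exists>t. z t \<noteq> 0) \<and>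
     (\<forall>t. (z has_vector_derivative (A t *v z t)) (at t)) \<and> (\<forall>t. z (t + T) = \<rho> *\<^sub>R z t)"

end

theory Submission imports Defs begin

text \<open>Write \<open>u\<^sub>\<epsilon>(t) = x\<^sub>\<epsilon>(t + \<Delta>\<^sub>\<epsilon>) - x\<^sub>0(t)\<close>; the upper bound is the hypothesis on
  \<open>x\<^sub>\<epsilon>\<close>. For the lower bound pair \<open>u\<^sub>\<epsilon>\<close> with the adjoint eigenfunction \<open>z\<close>. Because \<open>z\<close>
  solves the adjoint variational equation, the first-order expansion of the perturbed vector field
  along the cycle gives \<open>\<langle>z, u\<^sub>\<epsilon>\<rangle>' = \<epsilon> \<langle>z, g(t, x\<^sub>0, 0)\<rangle> + o(\<epsilon>)\<close> uniformly. Integrating over a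
  period and using \<open>\<langle>z, u\<^sub>\<epsilon>\<rangle>(t) = \<rho> \<langle>z, u\<^sub>\<epsilon>\<rangle>(t - T)\<close> (\<open>u\<^sub>\<epsilon>\<close> is \<open>T\<close>-periodic, \<open>\<rho> \<noteq> 1\<close>) yields
  \<open>\<langle>z, u\<^sub>\<epsilon>\<rangle>(t) = \<epsilon> M\<^sup>\<bottom>\<^sub>z(t) + o(\<epsilon>)\<close>. Since \<open>M\<^sup>\<bottom>\<^sub>z\<close> is continuous and nonvanishing on
  \<open>[0, T]\<close>, this is at least a multiple of \<open>\<epsilon>\<close>, and Cauchy-Schwarz transfers the bound to
  \<open>\<parallel>u\<^sub>\<epsilon>\<parallel>\<close>.\<close>

lemma uniformly_continuous_near_compact:
  fixes F :: "'a::heine_borel \<Rightarrow> 'b::metric_space"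
  assumes F: "continuous_on S F" and S: "closed S" and K: "compact K" "K \<subseteq> S" and \<epsilon>: "\<epsilon> > 0"
  obtains d where "d > 0" "\<And>k q. k \<in> K \<Longrightarrow> q \<in> S \<Longrightarrow> dist q k < d \<Longrightarrow> dist (F q) (F k) < \<epsilon>"
proof -
  obtain a R where R: "K \<subseteq> cball a R"
    using compact_imp_bounded[OF K(1)] bounded_subset_cball by blast
  define C where "C = S \<inter> cball a (R + 1)"
  have "uniformly_continuous_on C F"
    unfolding C_def by (intro compact_uniformly_continuous continuous_on_subset[OF F] closed_Int_compact S) auto
  then obtain d0 where d0: "d0 > 0" "\<And>p q. p \<in> C \<Longrightarrow> q \<in> C \<Longrightarrow> dist q p < d0 \<Longrightarrow> dist (F q) (F p) < \<epsilon>"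
    unfolding uniformly_continuous_on_def using \<epsilon> by metis
  show ?thesis
  proof (rule that[of "min d0 1"])
    fix k q assume k: "k \<in> K" and q: "q \<in> S" and kq: "dist q k < min d0 1"
    have "dist a q \<le> dist a k + dist k q" by (rule dist_triangle)
    then have "k \<in> C" "q \<in> C"
      using k q kq R K(2) by (auto simp: C_def dist_commute subset_iff)
    then show "dist (F q) (F k) < \<epsilon>" using d0(2) kq by auto
  qed (use d0 in auto)
qed

lemma compact_continuous_nonzero_bounded_below:
  fixes F :: "'a::topological_space \<Rightarrow> real"
  assumes S: "compact S" and F: "continuous_on S F" and nz: "\<And>t. t \<in> S \<Longrightarrow> F t \<noteq> 0"
  obtains m where "m > 0" "\<And>t. t \<in> S \<Longrightarrow> m \<le> \<bar>F t\<bar>"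
proof (cases "S = {}")
  case False
  have "continuous_on S (\<lambda>t. \<bar>F t\<bar>)" using F by (intro continuous_intros)
  then obtain t0 where "t0 \<in> S" "\<And>t. t \<in> S \<Longrightarrow> \<bar>F t0\<bar> \<le> \<bar>F t\<bar>"
    using continuous_attains_inf[OF S False] by blast
  then show ?thesis using that[of "\<bar>F t0\<bar>"] nz by auto
qed (use that[of 1] in auto)

lemma onorm_matrix_vector_mult_le:
  fixes A :: "real^'n^'m"
  shows "onorm ((*v) A) \<le> real CARD('m) * real CARD('n) * norm A"
  by (rule onorm_le_matrix_component)
     (rule order_trans[OF component_le_norm_cart Finite_Cartesian_Product.norm_nth_le])

lemma uniform_linearization:
  fixes f :: "real^'n \<Rightarrow> real^'m" and J :: "real^'n \<Rightarrow> real^'n^'m"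
  assumes f_deriv: "\<And>y. (f has_derivative (\<lambda>h. J y *v h)) (at y)"
    and J_cont: "continuous_on UNIV J" and K: "compact K" and \<eta>: "\<eta> > 0"
  obtains r where "r > 0"
    "\<And>a b. b \<in> K \<Longrightarrow> norm (a - b) \<le> r \<Longrightarrow> norm (f a - f b - J b *v (a - b)) \<le> \<eta> * norm (a - b)"
proof -
  define C where "C = real CARD('m) * real CARD('n)"
  have C: "C > 0" unfolding C_def by simp
  obtain d where d: "d > 0" and dJ: "\<And>b a. b \<in> K \<Longrightarrow> dist a b < d \<Longrightarrow> dist (J a) (J b) < \<eta> / C"
    using uniformly_continuous_near_compact[OF J_cont closed_UNIV K, of "\<eta> / C"] \<eta> C by auto
  show ?thesis
  proof (rule that[of "d / 2"])
    fix a b assume b: "b \<in> K" and ab: "norm (a - b) \<le> d / 2"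
    have "norm (f a - f b - J b *v (a - b)) \<le> norm (a - b) * \<eta>"
    proof (rule differentiable_bound_linearization[where S="ball b d" and f' = "\<lambda>y h. J y *v h"])
      show "b + t *\<^sub>R (a - b) \<in> ball b d" if "t \<in> {0..1}" for t
      proof -
        have "t * norm (a - b) \<le> norm (a - b)" using that by (auto intro!: mult_left_le_one_le)
        then show ?thesis using that ab d by (auto simp: dist_norm)
      qed
      show "(f has_derivative (\<lambda>h. J y *v h)) (at y within ball b d)" for y
        using f_deriv has_derivative_at_withinI by blast
      show "onorm ((\<lambda>h. J y *v h) - (\<lambda>h. J b *v h)) \<le> \<eta>" if "y \<in> ball b d" for y
      proof -
        have "(\<lambda>h. J y *v h) - (\<lambda>h. J b *v h) = (*v) (J y - J b)"
          by (rule ext) (simp add: matrix_vector_mult_diff_rdistrib)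
        moreover have "C * norm (J y - J b) \<le> \<eta>"
          using dJ[OF b, of y] that C by (simp add: dist_norm norm_minus_commute field_simps)
        ultimately show ?thesis using onorm_matrix_vector_mult_le[of "J y - J b"] by (simp add: C_def)
      qed
    qed (use d in auto)
    then show "norm (f a - f b - J b *v (a - b)) \<le> \<eta> * norm (a - b)" by (simp add: mult.commute)
  qed (use d in auto)
qed

lemma uniform_first_order_expansion:
  fixes f :: "real^'n \<Rightarrow> real^'m" and J :: "real^'n \<Rightarrow> real^'n^'m"
    and g :: "real \<Rightarrow> real^'n \<Rightarrow> real \<Rightarrow> real^'m"
  assumes f_deriv: "\<And>y. (f has_derivative (\<lambda>h. J y *v h)) (at y)"
    and J_cont: "continuous_on UNIV J"
    and g_cont: "continuous_on (UNIV \<times> UNIV \<times> {0..1}) (\<lambda>(t, y, e). g t y e)"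
    and K: "compact K" and \<eta>: "\<eta> > 0"
  obtains r where "r > 0"
    "\<And>s p y \<tau> e. (s, p) \<in> K \<Longrightarrow> norm (y - p) \<le> r \<Longrightarrow> \<bar>\<tau>\<bar> \<le> r \<Longrightarrow> e \<in> {0..r} \<Longrightarrow>
      norm (f y + e *\<^sub>R g (s + \<tau>) y e - f p - J p *v (y - p) - e *\<^sub>R g s p 0)
        \<le> \<eta> * (norm (y - p) + e)"
proof -
  have K_states: "compact (snd ` K)"
    by (intro compact_continuous_image K continuous_on_snd continuous_on_id)
  obtain r1 where r1: "r1 > 0" and lin: "\<And>y p. p \<in> snd ` K \<Longrightarrow> norm (y - p) \<le> r1 \<Longrightarrow>
      norm (f y - f p - J p *v (y - p)) \<le> \<eta> * norm (y - p)"
    by (rule uniform_linearization[OF f_deriv J_cont K_states \<eta>]) iprover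
  let ?G = "\<lambda>(t, y, e). g t y e" and ?S = "UNIV \<times> UNIV \<times> {0..1::real}"
  have K_unperturbed: "compact ((\<lambda>(s, p). (s, p, 0::real)) ` K)"
    by (intro compact_continuous_image K) (auto intro!: continuous_intros simp: case_prod_unfold)
  have "closed ?S" "(\<lambda>(s, p). (s, p, 0)) ` K \<subseteq> ?S"
    by (auto intro!: closed_Times)
  then obtain d where d: "d > 0" and cont: "\<And>k q. k \<in> (\<lambda>(s, p). (s, p, 0)) ` K \<Longrightarrow> q \<in> ?S \<Longrightarrow>
      dist q k < d \<Longrightarrow> dist (?G q) (?G k) < \<eta>"
    using uniformly_continuous_near_compact[OF g_cont _ K_unperturbed _ \<eta>] by blast
  define r where "r = min (min r1 1) (d / 4)"
  show ?thesis
  proof (rule that[of r])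
    fix s p y \<tau> e
    assume sp: "(s, p) \<in> K" and y: "norm (y - p) \<le> r" and \<tau>: "\<bar>\<tau>\<bar> \<le> r" and e: "e \<in> {0..r}"
    have "dist (s + \<tau>, y, e) (s, p, 0) \<le> \<bar>\<tau>\<bar> + (norm (y - p) + \<bar>e\<bar>)"
      using norm_Pair_le[of \<tau> "(y - p, e)"] norm_Pair_le[of "y - p" e] by (simp add: dist_norm)
    also have "\<dots> < d" using y \<tau> e d by (simp add: r_def)
    finally have "norm (g (s + \<tau>) y e - g s p 0) \<le> \<eta>"
      using cont[of "(s, p, 0)" "(s + \<tau>, y, e)"] sp e by (force simp: r_def dist_norm)
    then have gdiff: "e * norm (g (s + \<tau>) y e - g s p 0) \<le> e * \<eta>"
      using e by (simp add: mult_left_mono)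
    have "f y + e *\<^sub>R g (s + \<tau>) y e - f p - J p *v (y - p) - e *\<^sub>R g s p 0
        = (f y - f p - J p *v (y - p)) + e *\<^sub>R (g (s + \<tau>) y e - g s p 0)"
      by (simp add: algebra_simps)
    also have "norm \<dots> \<le> norm (f y - f p - J p *v (y - p)) + e * norm (g (s + \<tau>) y e - g s p 0)"
      using norm_triangle_ineq[of _ "e *\<^sub>R _"] e by simp
    also have "\<dots> \<le> \<eta> * norm (y - p) + e * \<eta>"
      using lin[of p y] sp y gdiff by (force simp: r_def)
    finally show "norm (f y + e *\<^sub>R g (s + \<tau>) y e - f p - J p *v (y - p) - e *\<^sub>R g s p 0)
        \<le> \<eta> * (norm (y - p) + e)" by (simp add: algebra_simps)
  qed (simp add: r_def r1 d)
qed

lemma adjoint_pairing_has_real_derivative: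
  fixes z u :: "real \<Rightarrow> real^'n" and A :: "real^'n^'n"
  assumes z: "(z has_vector_derivative ((- transpose A) *v z t)) (at t)"
    and u: "(u has_vector_derivative v) (at t)"
  shows "((\<lambda>s. z s \<bullet> u s) has_real_derivative z t \<bullet> (v - A *v u t)) (at t)"
proof -
  have adj: "((- transpose A) *v z t) \<bullet> u t = - (z t \<bullet> (A *v u t))"
    using matrix_vector_mult_diff_rdistrib[of 0 "transpose A" "z t"] by (simp add: dot_lmul_matrix)
  have "((\<lambda>s. z s \<bullet> u s) has_derivative
      (\<lambda>h. z t \<bullet> (h *\<^sub>R v) + (h *\<^sub>R ((- transpose A) *v z t)) \<bullet> u t)) (at t)"
    using z u unfolding has_vector_derivative_def by (rule has_derivative_inner)
  then show ?thesis
    unfolding has_real_derivative_iff_has_vector_derivative has_vector_derivative_def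
    by (rule has_derivative_eq_rhs) (auto simp: adj algebra_simps inner_diff_right)
qed

lemma multiplier_integral_estimate:
  fixes w D h :: "real \<Rightarrow> real"
  assumes T: "T > 0" and \<rho>: "\<rho> \<noteq> 0" "\<rho> \<noteq> 1"
    and w': "\<And>s. s \<in> {t - T..t} \<Longrightarrow> (w has_real_derivative D s) (at s)"
    and w_mult: "w t = \<rho> * w (t - T)"
    and h: "h integrable_on {t - T..t}"
    and D: "\<And>s. s \<in> {t - T..t} \<Longrightarrow> \<bar>D s - e * h s\<bar> \<le> \<eta>"
  shows "\<bar>w t - e * (\<rho> / (\<rho> - 1) * integral {t - T..t} h)\<bar> \<le> \<bar>\<rho> / (\<rho> - 1)\<bar> * \<eta> * T"
proof -
  let ?I = "integral {t - T..t} h"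
  have "(D has_integral (w t - w (t - T))) {t - T..t}"
    using T w' by (intro fundamental_theorem_of_calculus)
      (auto simp: has_real_derivative_iff_has_vector_derivative[symmetric] intro: has_field_derivative_at_within)
  moreover have "w t - w (t - T) = (\<rho> - 1) / \<rho> * w t"
    using w_mult \<rho> by (simp add: field_simps)
  ultimately have "((\<lambda>s. D s - e * h s) has_integral ((\<rho> - 1) / \<rho> * w t - e * ?I)) {t - T..t}"
    using has_integral_diff[OF _ has_integral_mult_right[OF integrable_integral[OF h]]] by auto
  moreover have "\<eta> \<ge> 0"
    using D[of t] T by (auto intro: order_trans[OF abs_ge_zero])
  ultimately have "norm ((\<rho> - 1) / \<rho> * w t - e * ?I) \<le> \<eta> * Henstock_Kurzweil_Integration.content (cbox (t - T) t)"
    using D by (intro has_integral_bound[where f = "\<lambda>s. D s - e * h s"]) auto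
  then have bound: "\<bar>(\<rho> - 1) / \<rho> * w t - e * ?I\<bar> \<le> \<eta> * T"
    using T by simp
  have "w t - e * (\<rho> / (\<rho> - 1) * ?I) = \<rho> / (\<rho> - 1) * ((\<rho> - 1) / \<rho> * w t - e * ?I)"
    using \<rho> by (simp add: field_simps)
  then have "\<bar>w t - e * (\<rho> / (\<rho> - 1) * ?I)\<bar> = \<bar>\<rho> / (\<rho> - 1)\<bar> * \<bar>(\<rho> - 1) / \<rho> * w t - e * ?I\<bar>"
    by (simp only: abs_mult)
  also have "\<dots> \<le> \<bar>\<rho> / (\<rho> - 1)\<bar> * (\<eta> * T)"
    by (rule mult_left_mono[OF bound abs_ge_zero])
  finally show ?thesis by (simp only: mult.assoc)
qed

lemma adjoint_pairing_period_estimate: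
  fixes A :: "real \<Rightarrow> real^'n^'n" and z u v k :: "real \<Rightarrow> real^'n"
  assumes T: "T > 0" and \<rho>: "\<rho> \<noteq> 0" "\<rho> \<noteq> 1"
    and z': "\<And>s. (z has_vector_derivative ((- transpose (A s)) *v z s)) (at s)"
    and z_mult: "\<And>s. z (s + T) = \<rho> *\<^sub>R z s"
    and u': "\<And>s. (u has_vector_derivative v s) (at s)"
    and u_per: "\<And>s. u (s + T) = u s"
    and k: "(\<lambda>s. z s \<bullet> k s) integrable_on {t - T..t}"
    and defect: "\<And>s. s \<in> {t - T..t} \<Longrightarrow> norm (v s - A s *v u s - e *\<^sub>R k s) \<le> \<delta>"
    and Z: "\<And>s. s \<in> {t - T..t} \<Longrightarrow> norm (z s) \<le> Z"
  shows "\<bar>z t \<bullet> u t - e * (\<rho> / (\<rho> - 1) * integral {t - T..t} (\<lambda>s. z s \<bullet> k s))\<bar>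
    \<le> \<bar>\<rho> / (\<rho> - 1)\<bar> * (Z * \<delta>) * T"
proof (rule multiplier_integral_estimate[OF T \<rho> adjoint_pairing_has_real_derivative[OF z' u'] _ k])
  show "z t \<bullet> u t = \<rho> * (z (t - T) \<bullet> u (t - T))"
    using z_mult[of "t - T"] u_per[of "t - T"] by simp
  show "\<bar>z s \<bullet> (v s - A s *v u s) - e * (z s \<bullet> k s)\<bar> \<le> Z * \<delta>" if s: "s \<in> {t - T..t}" for s
  proof -
    have "\<bar>z s \<bullet> (v s - A s *v u s) - e * (z s \<bullet> k s)\<bar> = \<bar>z s \<bullet> (v s - A s *v u s - e *\<^sub>R k s)\<bar>"
      by (simp add: inner_diff_right)
    also have "\<dots> \<le> norm (z s) * norm (v s - A s *v u s - e *\<^sub>R k s)"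
      by (rule Cauchy_Schwarz_ineq2)
    also have "\<dots> \<le> Z * \<delta>"
      using defect[OF s] Z[OF s] order_trans[OF norm_ge_zero Z[OF s]] by (intro mult_mono) auto
    finally show ?thesis .
  qed
qed

lemma continuous_on_sliding_integral:
  fixes h :: "real \<Rightarrow> 'a::banach"
  assumes h: "continuous_on UNIV h" and T: "T \<ge> 0"
  shows "continuous_on {a..b} (\<lambda>t. integral {t - T..t} h)"
proof -
  have int: "h integrable_on {c..d}" for c d
    by (rule integrable_continuous_interval) (rule continuous_on_subset[OF h], simp)
  have split: "integral {t - T..t} h = integral {a - T..t} h - integral {a - T..t - T} h"
    if "t \<in> {a..b}" for t
    using Henstock_Kurzweil_Integration.integral_combine[OF _ _ int, of "a - T" "t - T" t] that T by (simp add: algebra_simps)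
  have cont: "continuous_on {a - T..b} (\<lambda>t. integral {a - T..t} h)"
    by (rule indefinite_integral_continuous_1[OF int])
  have "continuous_on {a..b} (\<lambda>t. integral {a - T..t} h - integral {a - T..t - T} h)"
    using T by (intro continuous_on_diff continuous_on_subset[OF cont]
        continuous_on_compose2[OF cont, of _ "\<lambda>t. t - T"]) (auto intro!: continuous_intros)
  then show ?thesis
    by (rule continuous_on_eq) (simp add: split)
qed

lemma periodic_perturbation_first_order:
  fixes f :: "real^'n \<Rightarrow> real^'n" and J :: "real^'n \<Rightarrow> real^'n^'n"
    and g :: "real \<Rightarrow> real^'n \<Rightarrow> real \<Rightarrow> real^'n"
    and x0 :: "real \<Rightarrow> real^'n" and x :: "real \<Rightarrow> real \<Rightarrow> real^'n" and \<Delta> :: "real \<Rightarrow> real"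
  assumes f_deriv: "\<And>y. (f has_derivative (\<lambda>h. J y *v h)) (at y)"
    and J_cont: "continuous_on UNIV J"
    and g_cont: "continuous_on (UNIV \<times> UNIV \<times> {0..1}) (\<lambda>(t, y, e). g t y e)"
    and x0_cont: "continuous_on UNIV x0" and x0_per: "\<And>t. x0 (t + T) = x0 t"
    and M_pos: "M > 0" and eps0_pos: "\<epsilon>0 > 0"
    and x_per: "\<And>\<epsilon> t. \<epsilon> \<in> {0<..\<epsilon>0} \<Longrightarrow> x \<epsilon> (t + T) = x \<epsilon> t"
    and x_close: "\<And>\<epsilon> t. \<epsilon> \<in> {0<..\<epsilon>0} \<Longrightarrow> t \<in> {0..T} \<Longrightarrow>
        norm (x \<epsilon> (t + \<Delta> \<epsilon>) - x0 t) \<le> M * \<epsilon>"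
    and \<Delta>_lim: "(\<Delta> \<longlongrightarrow> 0) (at_right 0)"
    and \<eta>: "\<eta> > 0"
  shows "\<forall>\<^sub>F e in at_right 0. \<forall>s\<in>{-T..T}.
    norm (f (x e (s + \<Delta> e)) + e *\<^sub>R g (s + \<Delta> e) (x e (s + \<Delta> e)) e - f (x0 s)
      - J (x0 s) *v (x e (s + \<Delta> e) - x0 s) - e *\<^sub>R g s (x0 s) 0) \<le> \<eta> * e"
proof -
  have "compact ((\<lambda>s. (s, x0 s)) ` {-T..T})"
    by (intro compact_continuous_image continuous_intros continuous_on_subset[OF x0_cont]) auto
  moreover have "\<eta> / (M + 1) > 0" using \<eta> M_pos by simp
  ultimately obtain r where r: "r > 0" and expand: "\<And>s p y \<tau> e. (s, p) \<in> (\<lambda>s. (s, x0 s)) ` {-T..T} \<Longrightarrow>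
      norm (y - p) \<le> r \<Longrightarrow> \<bar>\<tau>\<bar> \<le> r \<Longrightarrow> e \<in> {0..r} \<Longrightarrow>
      norm (f y + e *\<^sub>R g (s + \<tau>) y e - f p - J p *v (y - p) - e *\<^sub>R g s p 0)
        \<le> \<eta> / (M + 1) * (norm (y - p) + e)"
    by (rule uniform_first_order_expansion[OF f_deriv J_cont g_cont]) iprover
  have "\<forall>\<^sub>F e in at_right 0. e \<in> {0<..\<epsilon>0} \<and> e \<le> r \<and> M * e \<le> r"
    by (rule eventually_at_rightI[where b = "min \<epsilon>0 (min r (r / M))"])
      (use eps0_pos r M_pos in \<open>auto simp: less_divide_eq mult.commute\<close>)
  moreover have "\<forall>\<^sub>F e in at_right 0. \<bar>\<Delta> e\<bar> \<le> r"
    using \<Delta>_lim[unfolded tendsto_iff, rule_format, OF r] by (auto elim: eventually_mono)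
  ultimately show ?thesis
  proof eventually_elim
    case (elim e)
    then have e: "e \<in> {0<..\<epsilon>0}" "e \<le> r" "M * e \<le> r" "\<bar>\<Delta> e\<bar> \<le> r" by auto
    show ?case
    proof
      fix s :: real assume s: "s \<in> {-T..T}"
      let ?y = "x e (s + \<Delta> e)"
      have close: "norm (?y - x0 s) \<le> M * e"
      proof (cases "s \<ge> 0")
        case True
        then show ?thesis using x_close[OF e(1), of s] s by auto
      next
        case False
        then have "norm (x e (s + T + \<Delta> e) - x0 (s + T)) \<le> M * e"
          using x_close[OF e(1), of "s + T"] s by auto
        then show ?thesis using x_per[OF e(1), of "s + \<Delta> e"] x0_per[of s] by (simp add: add_ac)
      qed
      have "norm (f ?y + e *\<^sub>R g (s + \<Delta> e) ?y e - f (x0 s) - J (x0 s) *v (?y - x0 s) - e *\<^sub>R g s (x0 s) 0)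
          \<le> \<eta> / (M + 1) * (norm (?y - x0 s) + e)"
        using expand[of s "x0 s" ?y "\<Delta> e" e] s close e by auto
      also have "\<dots> \<le> \<eta> / (M + 1) * (M * e + e)"
        using close \<eta> M_pos by (intro mult_left_mono) auto
      also have "\<dots> = \<eta> * e"
        using M_pos by (simp add: field_simps)
      finally show "norm (f ?y + e *\<^sub>R g (s + \<Delta> e) ?y e - f (x0 s) - J (x0 s) *v (?y - x0 s)
          - e *\<^sub>R g s (x0 s) 0) \<le> \<eta> * e" .
    qed
  qed
qed

definition melnikov_perp ::
  "real \<Rightarrow> real \<Rightarrow> (real \<Rightarrow> real^'n) \<Rightarrow> (real \<Rightarrow> real^'n \<Rightarrow> real \<Rightarrow> real^'n) \<Rightarrow> (real \<Rightarrow> real^'n)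
    \<Rightarrow> real \<Rightarrow> real" where
  "melnikov_perp T \<rho> z g x0 t = \<rho> / (\<rho> - 1) * integral {t - T..t} (\<lambda>s. z s \<bullet> g s (x0 s) 0)"

lemma periodic_solution_continuous: "periodic_solution f T x \<Longrightarrow> continuous_on UNIV x"
  unfolding periodic_solution_def
  by (meson continuous_at_imp_continuous_on has_vector_derivative_continuous)

lemma eigenfunction_continuous: "eigenfunction A T z \<rho> \<Longrightarrow> continuous_on UNIV z"
  unfolding eigenfunction_def
  by (meson continuous_at_imp_continuous_on has_vector_derivative_continuous)

lemma eigenfunction_multiplier_nonzero:
  assumes "eigenfunction A T z \<rho>"
  shows "\<rho> \<noteq> 0"
proof
  assume "\<rho> = 0"
  from assms obtain t where "z t \<noteq> 0" and "z t = \<rho> *\<^sub>R z (t - T)"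
    unfolding eigenfunction_def by (metis diff_add_cancel)
  with \<open>\<rho> = 0\<close> show False by simp
qed

lemma continuous_on_forcing_pairing:
  fixes g :: "real \<Rightarrow> 'a::topological_space \<Rightarrow> real \<Rightarrow> 'b::real_inner"
  assumes g_cont: "continuous_on (UNIV \<times> UNIV \<times> {0..1}) (\<lambda>(t, y, e). g t y e)"
    and x0_cont: "continuous_on UNIV x0" and z_cont: "continuous_on UNIV z"
  shows "continuous_on UNIV (\<lambda>s. z s \<bullet> g s (x0 s) 0)"
proof -
  have "continuous_on UNIV (\<lambda>s. (s, x0 s, 0::real))" by (intro continuous_intros x0_cont)
  then have "continuous_on UNIV ((\<lambda>(t, y, e). g t y e) \<circ> (\<lambda>s. (s, x0 s, 0::real)))"
    by (rule continuous_on_compose) (rule continuous_on_subset[OF g_cont], auto)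
  then show ?thesis by (simp add: o_def continuous_on_inner z_cont)
qed

lemma continuous_on_melnikov_perp:
  assumes g_cont: "continuous_on (UNIV \<times> UNIV \<times> {0..1}) (\<lambda>(t, y, e). g t y e)"
    and "continuous_on UNIV x0" "continuous_on UNIV z" "T \<ge> 0"
  shows "continuous_on {a..b} (melnikov_perp T \<rho> z g x0)"
  unfolding melnikov_perp_def
  using assms by (intro continuous_intros continuous_on_sliding_integral continuous_on_forcing_pairing)

lemma adjoint_pairing_periodic_perturbation:
  fixes f :: "real^'n \<Rightarrow> real^'n" and J :: "real^'n \<Rightarrow> real^'n^'n"
    and g :: "real \<Rightarrow> real^'n \<Rightarrow> real \<Rightarrow> real^'n" and x0 y z :: "real \<Rightarrow> real^'n"
  assumes g_cont: "continuous_on (UNIV \<times> UNIV \<times> {0..1}) (\<lambda>(t, y, e). g t y e)"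
    and x0: "periodic_solution f T x0"
    and z: "eigenfunction (\<lambda>t. - transpose (J (x0 t))) T z \<rho>" and \<rho>1: "\<rho> \<noteq> 1"
    and y': "\<And>s. (y has_vector_derivative (f (y s) + e *\<^sub>R g (s + d) (y s) e)) (at s)"
    and y_per: "\<And>s. y (s + T) = y s"
    and defect: "\<And>s. s \<in> {-T..T} \<Longrightarrow>
      norm (f (y s) + e *\<^sub>R g (s + d) (y s) e - f (x0 s) - J (x0 s) *v (y s - x0 s) - e *\<^sub>R g s (x0 s) 0)
        \<le> \<delta>"
    and Z: "\<And>s. s \<in> {-T..T} \<Longrightarrow> norm (z s) \<le> Z"
    and t: "t \<in> {0..T}"
  shows "\<bar>z t \<bullet> (y t - x0 t) - e * melnikov_perp T \<rho> z g x0 t\<bar> \<le> \<bar>\<rho> / (\<rho> - 1)\<bar> * (Z * \<delta>) * T"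
  unfolding melnikov_perp_def
proof (rule adjoint_pairing_period_estimate)
  from x0 show "T > 0" "\<And>s. ((\<lambda>s. y s - x0 s) has_vector_derivative
      (f (y s) + e *\<^sub>R g (s + d) (y s) e - f (x0 s))) (at s)"
    "\<And>s. y (s + T) - x0 (s + T) = y s - x0 s"
    unfolding periodic_solution_def by (auto intro!: has_vector_derivative_diff y' simp: y_per)
  from z show "\<And>s. (z has_vector_derivative ((- transpose (J (x0 s))) *v z s)) (at s)"
    "\<And>s. z (s + T) = \<rho> *\<^sub>R z s"
    unfolding eigenfunction_def by auto
  show "\<rho> \<noteq> 0" using eigenfunction_multiplier_nonzero[OF z] .
  show "\<rho> \<noteq> 1" by (fact \<rho>1)
  show "(\<lambda>s. z s \<bullet> g s (x0 s) 0) integrable_on {t - T..t}"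
    using continuous_on_forcing_pairing[OF g_cont periodic_solution_continuous[OF x0]
        eigenfunction_continuous[OF z]]
    by (intro integrable_continuous_interval) (auto intro: continuous_on_subset)
  fix s assume "s \<in> {t - T..t}"
  then have "s \<in> {-T..T}" using t by auto
  then show "norm (z s) \<le> Z"
    and "norm (f (y s) + e *\<^sub>R g (s + d) (y s) e - f (x0 s) - J (x0 s) *v (y s - x0 s) - e *\<^sub>R g s (x0 s) 0)
      \<le> \<delta>"
    using Z defect by auto
qed

lemma adjoint_pairing_asymptotics:
  fixes f :: "real^'n \<Rightarrow> real^'n" and J :: "real^'n \<Rightarrow> real^'n^'n"
    and g :: "real \<Rightarrow> real^'n \<Rightarrow> real \<Rightarrow> real^'n"
    and x0 z :: "real \<Rightarrow> real^'n" and x :: "real \<Rightarrow> real \<Rightarrow> real^'n" and \<Delta> :: "real \<Rightarrow> real"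
  assumes f_deriv: "\<And>y. (f has_derivative (\<lambda>h. J y *v h)) (at y)"
    and J_cont: "continuous_on UNIV J"
    and g_cont: "continuous_on (UNIV \<times> UNIV \<times> {0..1}) (\<lambda>(t, y, e). g t y e)"
    and x0: "periodic_solution f T x0"
    and z: "eigenfunction (\<lambda>t. - transpose (J (x0 t))) T z \<rho>" and \<rho>1: "\<rho> \<noteq> 1"
    and M_pos: "M > 0" and eps0_pos: "\<epsilon>0 > 0"
    and x_sol: "\<And>\<epsilon> t. \<epsilon> \<in> {0<..\<epsilon>0} \<Longrightarrow>
        (x \<epsilon> has_vector_derivative (f (x \<epsilon> t) + \<epsilon> *\<^sub>R g t (x \<epsilon> t) \<epsilon>)) (at t)"
    and x_per: "\<And>\<epsilon> t. \<epsilon> \<in> {0<..\<epsilon>0} \<Longrightarrow> x \<epsilon> (t + T) = x \<epsilon> t"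
    and x_close: "\<And>\<epsilon> t. \<epsilon> \<in> {0<..\<epsilon>0} \<Longrightarrow> t \<in> {0..T} \<Longrightarrow>
        norm (x \<epsilon> (t + \<Delta> \<epsilon>) - x0 t) \<le> M * \<epsilon>"
    and \<Delta>_lim: "(\<Delta> \<longlongrightarrow> 0) (at_right 0)"
    and \<eta>: "\<eta> > 0"
  shows "\<forall>\<^sub>F e in at_right 0. \<forall>t\<in>{0..T}.
    \<bar>z t \<bullet> (x e (t + \<Delta> e) - x0 t) - e * melnikov_perp T \<rho> z g x0 t\<bar> \<le> \<eta> * e"
proof -
  from x0 have T: "T > 0" and x0_per: "\<And>t. x0 (t + T) = x0 t"
    unfolding periodic_solution_def by auto
  obtain Z where Z: "Z \<ge> 0" "\<And>s. s \<in> {-T..T} \<Longrightarrow> norm (z s) \<le> Z"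
    by (rule continuous_on_compact_bound[OF compact_Icc[of "-T" T]
        continuous_on_subset[OF eigenfunction_continuous[OF z] subset_UNIV]]) auto
  define c where "c = \<bar>\<rho> / (\<rho> - 1)\<bar> * (Z + 1) * T"
  have c: "c > 0" using eigenfunction_multiplier_nonzero[OF z] \<rho>1 T Z by (simp add: c_def)
  have "\<forall>\<^sub>F e in at_right 0. \<forall>s\<in>{-T..T}.
    norm (f (x e (s + \<Delta> e)) + e *\<^sub>R g (s + \<Delta> e) (x e (s + \<Delta> e)) e - f (x0 s)
      - J (x0 s) *v (x e (s + \<Delta> e) - x0 s) - e *\<^sub>R g s (x0 s) 0) \<le> \<eta> / c * e"
    by (rule periodic_perturbation_first_order[OF f_deriv J_cont g_cont periodic_solution_continuous[OF x0]
        x0_per M_pos eps0_pos _ _ \<Delta>_lim]) (fact x_per x_close divide_pos_pos[OF \<eta> c])+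
  moreover have "\<forall>\<^sub>F e in at_right 0. e \<in> {0<..\<epsilon>0}"
    by (rule eventually_at_rightI[where b = \<epsilon>0]) (use eps0_pos in auto)
  ultimately show ?thesis
  proof eventually_elim
    case (elim e)
    then have e: "e \<in> {0<..\<epsilon>0}" by auto
    have shifted: "((\<lambda>s. x e (s + \<Delta> e)) has_vector_derivative
        (f (x e (s + \<Delta> e)) + e *\<^sub>R g (s + \<Delta> e) (x e (s + \<Delta> e)) e)) (at s)" for s
    proof -
      have "((\<lambda>s. s + \<Delta> e) has_vector_derivative 1) (at s)"
        by (auto intro!: derivative_eq_intros)
      from vector_diff_chain_at[OF this x_sol[OF e]] show ?thesis by (simp add: o_def)
    qed
    have shifted_per: "x e (s + T + \<Delta> e) = x e (s + \<Delta> e)" for s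
      using x_per[OF e, of "s + \<Delta> e"] by (simp add: add_ac)
    have Z1: "norm (z s) \<le> Z + 1" if "s \<in> {-T..T}" for s
      using Z(2)[OF that] by simp
    have "\<bar>z t \<bullet> (x e (t + \<Delta> e) - x0 t) - e * melnikov_perp T \<rho> z g x0 t\<bar>
        \<le> \<bar>\<rho> / (\<rho> - 1)\<bar> * ((Z + 1) * (\<eta> / c * e)) * T" if "t \<in> {0..T}" for t
      by (rule adjoint_pairing_periodic_perturbation[OF g_cont x0 z \<rho>1 shifted shifted_per _ Z1 that])
        (use elim in auto)
    moreover have "\<bar>\<rho> / (\<rho> - 1)\<bar> * ((Z + 1) * (\<eta> / c * e)) * T = c * (\<eta> / c * e)"
      by (simp add: c_def ac_simps)
    ultimately show ?case using c by simp
  qed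
qed

lemma inner_close_imp_norm_lower_bound:
  fixes z u :: "'a::real_inner"
  assumes close: "\<bar>z \<bullet> u - e * \<mu>\<bar> \<le> m / 2 * e" and \<mu>: "m \<le> \<bar>\<mu>\<bar>"
    and z: "norm z \<le> Z" and e: "e \<ge> 0" and Z: "Z > 0"
  shows "m / (2 * Z) * e \<le> norm u"
proof -
  have "m * e \<le> \<bar>e * \<mu>\<bar>" using \<mu> e by (simp add: abs_mult mult_left_mono mult.commute)
  also have "\<dots> \<le> \<bar>z \<bullet> u\<bar> + \<bar>z \<bullet> u - e * \<mu>\<bar>" by arith
  also have "\<bar>z \<bullet> u\<bar> \<le> Z * norm u"
    using Cauchy_Schwarz_ineq2[of z u] z by (meson mult_right_mono norm_ge_zero order_trans)
  finally have "m / 2 * e \<le> Z * norm u" using close by linarith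
  then show ?thesis using Z by (simp add: field_simps)
qed

theorem corollary3:
  fixes f :: "real^'n \<Rightarrow> real^'n"
    and J :: "real^'n \<Rightarrow> real^'n^'n"
    and g :: "real \<Rightarrow> real^'n \<Rightarrow> real \<Rightarrow> real^'n"
    and x0 :: "real \<Rightarrow> real^'n"
    and x :: "real \<Rightarrow> real \<Rightarrow> real^'n"
    and \<Delta> :: "real \<Rightarrow> real"
    and z :: "real \<Rightarrow> real^'n"
    and T M \<epsilon>0 \<rho> :: real
  assumes f_deriv: "\<And>y. (f has_derivative (\<lambda>h. J y *v h)) (at y)"
    and J_cont: "continuous_on UNIV J"
    and g_cont: "continuous_on (UNIV \<times> UNIV \<times> {0..1}) (\<lambda>(t, y, e). g t y e)"
    and T_pos: "T > 0"
    and cycle: "limit_cycle f T x0"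
    and nondeg: "nondegenerate J T x0"
    and M_pos: "M > 0" and eps0_pos: "\<epsilon>0 > 0"
    and x_sol: "\<And>\<epsilon> t. \<epsilon> \<in> {0<..\<epsilon>0} \<Longrightarrow>
        (x \<epsilon> has_vector_derivative (f (x \<epsilon> t) + \<epsilon> *\<^sub>R g t (x \<epsilon> t) \<epsilon>)) (at t)"
    and x_per: "\<And>\<epsilon> t. \<epsilon> \<in> {0<..\<epsilon>0} \<Longrightarrow> x \<epsilon> (t + T) = x \<epsilon> t"
    and x_close: "\<And>\<epsilon> t. \<epsilon> \<in> {0<..\<epsilon>0} \<Longrightarrow> t \<in> {0..T} \<Longrightarrow>
        norm (x \<epsilon> (t + \<Delta> \<epsilon>) - x0 t) \<le> M * \<epsilon>"
    and \<Delta>_lim: "(\<Delta> \<longlongrightarrow> 0) (at_right 0)"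
    and z_eig: "eigenfunction (\<lambda>t. - transpose (J (x0 t))) T z \<rho>"
    and z_nonper: "\<not> (\<forall>t. z (t + T) = z t)"
    and Mperp: "\<And>t. t \<in> {0..T} \<Longrightarrow>
        \<rho> / (\<rho> - 1) * integral {t - T..t} (\<lambda>s. z s \<bullet> g s (x0 s) 0) \<noteq> 0"
  shows "\<exists>c1 c2. 0 < c1 \<and> c1 \<le> c2 \<and>
    (\<forall>\<^sub>F \<epsilon> in at_right 0. \<forall>t\<in>{0..T}.
        c1 * \<epsilon> \<le> norm (x \<epsilon> (t + \<Delta> \<epsilon>) - x0 t) \<and> norm (x \<epsilon> (t + \<Delta> \<epsilon>) - x0 t) \<le> c2 * \<epsilon>)"
  \<comment> \<open>Only the periodicity of \<open>x0\<close> is used: isolation and nondegeneracy of the cycle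
    matter for the existence of the \<open>x\<^sub>\<epsilon>\<close>, which is assumed here.\<close>
proof -
  have x0: "periodic_solution f T x0" using cycle by (simp add: limit_cycle_def)
  have \<rho>1: "\<rho> \<noteq> 1" using z_eig z_nonper by (auto simp: eigenfunction_def)
  have z_cont: "continuous_on UNIV z" using eigenfunction_continuous[OF z_eig] .
  have "continuous_on {0..T} (melnikov_perp T \<rho> z g x0)"
    using continuous_on_melnikov_perp[OF g_cont periodic_solution_continuous[OF x0] z_cont] T_pos by simp
  moreover have "\<And>t. t \<in> {0..T} \<Longrightarrow> melnikov_perp T \<rho> z g x0 t \<noteq> 0"
    using Mperp by (simp add: melnikov_perp_def)
  ultimately obtain m where m: "m > 0" "\<And>t. t \<in> {0..T} \<Longrightarrow> m \<le> \<bar>melnikov_perp T \<rho> z g x0 t\<bar>"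
    by (rule compact_continuous_nonzero_bounded_below[OF compact_Icc]) auto
  obtain Z where Z: "Z \<ge> 0" "\<And>t. t \<in> {0..T} \<Longrightarrow> norm (z t) \<le> Z"
    by (rule continuous_on_compact_bound[OF compact_Icc[of 0 T] continuous_on_subset[OF z_cont subset_UNIV]]) auto
  define c1 where "c1 = min (m / (2 * (Z + 1))) M"
  have "\<forall>\<^sub>F e in at_right 0. \<forall>t\<in>{0..T}.
      \<bar>z t \<bullet> (x e (t + \<Delta> e) - x0 t) - e * melnikov_perp T \<rho> z g x0 t\<bar> \<le> m / 2 * e"
    by (rule adjoint_pairing_asymptotics[OF f_deriv J_cont g_cont x0 z_eig \<rho>1 M_pos eps0_pos _ _ _ \<Delta>_lim])
      (use x_sol x_per x_close m in auto)
  moreover have "\<forall>\<^sub>F e in at_right 0. e \<in> {0<..\<epsilon>0}"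
    by (rule eventually_at_rightI[where b = \<epsilon>0]) (use eps0_pos in auto)
  ultimately have "\<forall>\<^sub>F e in at_right 0. \<forall>t\<in>{0..T}.
      c1 * e \<le> norm (x e (t + \<Delta> e) - x0 t) \<and> norm (x e (t + \<Delta> e) - x0 t) \<le> M * e"
  proof eventually_elim
    case (elim e)
    have "m / (2 * (Z + 1)) * e \<le> norm (x e (t + \<Delta> e) - x0 t)" if t: "t \<in> {0..T}" for t
      by (rule inner_close_imp_norm_lower_bound[where z = "z t"]) (use elim t m(2)[OF t] Z(1) Z(2)[OF t] in auto)
    moreover have "c1 * e \<le> m / (2 * (Z + 1)) * e"
      using elim by (intro mult_right_mono) (auto simp: c1_def)
    ultimately show ?case using x_close elim by force
  qed
  then show ?thesis
    using m(1) Z(1) M_pos by (intro exI[of _ c1] exI[of _ M]) (auto simp: c1_def)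
qed

end
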